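(* Let $\varepsilon>0$, $\bar\theta,\bar\varphi\in\mathbb{R}$, and let $P_1,P_2,P_3\in\mathbb{R}^3$ with $\|P_i\|\le1$ be $\varepsilon$-spanning for $(\bar\theta,\bar\varphi)$. Let $\theta,\varphi\in\mathbb{R}$ with $|\theta-\bar\theta|,|\varphi-\bar\varphi|\le\varepsilon$, and assume $\langle X(\theta,\varphi),P_i\rangle>0$ for $i=1,2,3$. Then $X(\theta,\varphi)\in\operatorname{span}^+(P_1,P_2,P_3)$.
   Context: $R(\alpha)=\begin{pmatrix}\cos\alpha&-\sin\alpha\\ \sin\alpha&\cos\alpha\end{pmatrix}$; $X(\theta,\varphi)=(\cos\theta\sin\varphi,\sin\theta\sin\varphi,\cos\varphi)^t$; $M(\theta,\varphi)=\begin{pmatrix}-\sin\theta&\cos\theta&0\\ -\cos\theta\cos\varphi&-\sin\theta\cos\varphi&\sin\varphi\end{pmatrix}$. For $M=M(\bar\theta,\bar\varphi)$, points $P_1,P_2,P_3$ of norm $\le1$ are $\varepsilon$-spanning for $(\bar\theta,\bar\varphi)$ if $\langle R(\pi/2)MP_1,MP_2\rangle$, $\langle R(\pi/2)MP_2,MP_3\rangle$, $\langle R(\pi/2)MP_3,MP_1\rangle$ are all $>2\varepsilon(\sqrt2+\varepsilon)$. $\operatorname{span}^+(P_1,P_2,P_3)=\{\sum\lambda_iP_i:\lambda_i>0\}$. *)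

theory Defs
  imports "HOL-Analysis.Analysis"
begin

definition rot :: "real \<Rightarrow> real^2^2" where
  "rot \<alpha> = vector [vector [cos \<alpha>, - sin \<alpha>], vector [sin \<alpha>, cos \<alpha>]]"

definition Xpt :: "real \<Rightarrow> real \<Rightarrow> real^3" where
  "Xpt \<theta> \<phi> = vector [cos \<theta> * sin \<phi>, sin \<theta> * sin \<phi>, cos \<phi>]"

definition Mmat :: "real \<Rightarrow> real \<Rightarrow> real^3^2" where
  "Mmat \<theta> \<phi> = vector [vector [- sin \<theta>, cos \<theta>, 0],
                           vector [- cos \<theta> * cos \<phi>, - sin \<theta> * cos \<phi>, sin \<phi>]]"

definition eps_spanning :: "real \<Rightarrow> real \<Rightarrow> real \<Rightarrow> real^3 \<Rightarrow> real^3 \<Rightarrow> real^3 \<Rightarrow> bool" where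
  "eps_spanning \<epsilon> \<theta>b \<phi>b P1 P2 P3 \<longleftrightarrow>
     norm P1 \<le> 1 \<and> norm P2 \<le> 1 \<and> norm P3 \<le> 1 \<and>
     (let M = Mmat \<theta>b \<phi>b; b = 2 * \<epsilon> * (sqrt 2 + \<epsilon>) in
       inner (rot (pi/2) *v (M *v P1)) (M *v P2) > b \<and>
       inner (rot (pi/2) *v (M *v P2)) (M *v P3) > b \<and>
       inner (rot (pi/2) *v (M *v P3)) (M *v P1) > b)"

definition span_pos :: "real^3 \<Rightarrow> real^3 \<Rightarrow> real^3 \<Rightarrow> (real^3) set" where
  "span_pos P1 P2 P3 = {l1 *\<^sub>R P1 + l2 *\<^sub>R P2 + l3 *\<^sub>R P3 | l1 l2 l3. l1 > 0 \<and> l2 > 0 \<and> l3 > 0}"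

end

theory Submission imports Defs begin

(* Under the projection M = M(\<theta>b,\<phi>b), the planar determinant <R(\<pi>/2) M P, M Q> equals the
   triple product X(\<theta>b,\<phi>b) \<bullet> (P \<times> Q), so \<epsilon>-spanning says that X(\<theta>b,\<phi>b) has triple
   products with P1, P2, P3 larger than 2\<epsilon>(\<surd>2 + \<epsilon>) > 2\<epsilon>.  The map X is 1-Lipschitz in each
   angle, so X(\<theta>,\<phi>) is within 2\<epsilon> of X(\<theta>b,\<phi>b), and since |P \<times> Q| \<le> 1 the triple products
   stay positive at X(\<theta>,\<phi>).  Cramer's rule writes det(P1,P2,P3) X as the combination of the
   P_i with these triple products as coefficients; pairing it with X and using X \<bullet> P_i > 0
   shows det(P1,P2,P3) > 0, so all coefficients of X are positive. *)

unbundle cross3_syntax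

lemma cos_sin_chord_le: "(cos a - cos b)\<^sup>2 + (sin a - sin b)\<^sup>2 \<le> (a - b)\<^sup>2" for a b :: real
proof -
  have half: "2 * ((a - b) / 2) = a - b" by simp
  have cos_diff_half: "cos (a - b) = 1 - 2 * (sin ((a - b) / 2))\<^sup>2"
    using cos_double_sin[of "(a - b) / 2"] unfolding half .
  have "(cos a - cos b)\<^sup>2 + (sin a - sin b)\<^sup>2 = 2 - 2 * cos (a - b)"
    by (simp add: cos_diff power2_diff algebra_simps)
  also have "\<dots> = 4 * (sin ((a - b) / 2))\<^sup>2"
    unfolding cos_diff_half by simp
  also have "\<dots> \<le> 4 * ((a - b) / 2)\<^sup>2"
    using abs_sin_x_le_abs_x[of "(a - b) / 2"] unfolding abs_le_square_iff
    by (rule mult_left_mono) simp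
  finally show ?thesis by (simp add: power_divide)
qed

lemma norm_sq_vec3: "(norm v)\<^sup>2 = (v$1)\<^sup>2 + (v$2)\<^sup>2 + (v$3)\<^sup>2" for v :: "real^3"
  unfolding power2_norm_eq_inner by (simp add: inner_vec_def sum_3 power2_eq_square)

lemma norm_Xpt_diff_theta: "norm (Xpt t p - Xpt t' p) \<le> \<bar>t - t'\<bar>"
proof (rule power2_le_imp_le)
  have "(norm (Xpt t p - Xpt t' p))\<^sup>2 = (sin p)\<^sup>2 * ((cos t - cos t')\<^sup>2 + (sin t - sin t')\<^sup>2)"
    unfolding norm_sq_vec3 Xpt_def by (simp add: power2_eq_square) algebra
  also have "\<dots> \<le> 1 * (t - t')\<^sup>2"
    using cos_sin_chord_le[of t t'] by (intro mult_mono) (simp_all add: abs_square_le_1)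
  finally show "(norm (Xpt t p - Xpt t' p))\<^sup>2 \<le> \<bar>t - t'\<bar>\<^sup>2" by simp
qed simp

lemma norm_Xpt_diff_phi: "norm (Xpt t p - Xpt t p') \<le> \<bar>p - p'\<bar>"
proof (rule power2_le_imp_le)
  have "(norm (Xpt t p - Xpt t p'))\<^sup>2
      = (sin p - sin p')\<^sup>2 * ((cos t)\<^sup>2 + (sin t)\<^sup>2) + (cos p - cos p')\<^sup>2"
    unfolding norm_sq_vec3 Xpt_def by (simp only: vector_3 vector_minus_component) algebra
  also have "\<dots> \<le> (p - p')\<^sup>2"
    using cos_sin_chord_le[of p p'] by simp
  finally show "(norm (Xpt t p - Xpt t p'))\<^sup>2 \<le> \<bar>p - p'\<bar>\<^sup>2" by simp
qed simp

lemma norm_Xpt_diff_le: "norm (Xpt t p - Xpt t' p') \<le> \<bar>t - t'\<bar> + \<bar>p - p'\<bar>"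
proof -
  have "norm (Xpt t p - Xpt t' p') \<le> norm (Xpt t p - Xpt t' p) + norm (Xpt t' p - Xpt t' p')"
    using norm_triangle_ineq[of "Xpt t p - Xpt t' p" "Xpt t' p - Xpt t' p'"] by simp
  then show ?thesis
    using norm_Xpt_diff_theta[of t p t'] norm_Xpt_diff_phi[of t' p p'] by linarith
qed

lemma inner_rot_Mmat_eq_triple_product:
  "inner (rot (pi/2) *v (Mmat t p *v P)) (Mmat t p *v Q) = Xpt t p \<bullet> (P \<times> Q)"
proof -
  have rot: "rot (pi/2) *v v = vector [- v$2, v$1]" for v :: "real^2"
    by (simp add: rot_def matrix_vector_mult_def vec_eq_iff forall_2 sum_2)
  have M: "Mmat t p *v v = vector [- sin t * v$1 + cos t * v$2,
                    - cos t * cos p * v$1 - sin t * cos p * v$2 + sin p * v$3]" for v :: "real^3"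
    by (simp add: Mmat_def matrix_vector_mult_def vec_eq_iff forall_2 sum_3)
  show ?thesis
    unfolding rot M Xpt_def cross3_def inner_vec_def sum_2 sum_3
    by (simp only: vector_2 vector_3 inner_real_def)
      (use sin_cos_squared_add[of t] sin_cos_squared_add[of p] in algebra)
qed

lemma norm_cross3_le: "norm (P \<times> Q) \<le> norm P * norm Q"
proof (rule power2_le_imp_le)
  show "(norm (P \<times> Q))\<^sup>2 \<le> (norm P * norm Q)\<^sup>2"
    using norm_cross_dot[of P Q] by (metis le_add_same_cancel1 zero_le_power2)
qed simp

lemma triple_product_pos_if_near:
  assumes "norm (X - Y) \<le> d" "norm P \<le> 1" "norm Q \<le> 1" "d < Y \<bullet> (P \<times> Q)"
  shows "0 < X \<bullet> (P \<times> Q)"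
proof -
  have "\<bar>(X - Y) \<bullet> (P \<times> Q)\<bar> \<le> norm (X - Y) * norm (P \<times> Q)"
    by (rule Cauchy_Schwarz_ineq2)
  also have "\<dots> \<le> d * 1"
  proof (rule mult_mono)
    show "norm (P \<times> Q) \<le> 1"
      using norm_cross3_le[of P Q] mult_le_one[OF assms(2) _ assms(3)] by simp
  qed (use assms(1) order_trans[OF norm_ge_zero assms(1)] in simp_all)
  finally show ?thesis
    using assms(4) by (simp add: inner_diff_left)
qed

lemma cramer_cross3:
  "(P1 \<bullet> (P2 \<times> P3)) *\<^sub>R X
     = (X \<bullet> (P2 \<times> P3)) *\<^sub>R P1 + (X \<bullet> (P3 \<times> P1)) *\<^sub>R P2 + (X \<bullet> (P1 \<times> P2)) *\<^sub>R P3"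
  unfolding vec_eq_iff forall_3 cross3_def inner_vec_def sum_3
  by (simp add: vector_3) algebra

lemma mem_span_pos_if_triple_products_pos:
  assumes d1: "0 < X \<bullet> (P2 \<times> P3)" and d2: "0 < X \<bullet> (P3 \<times> P1)" and d3: "0 < X \<bullet> (P1 \<times> P2)"
    and "0 < X \<bullet> P1" "0 < X \<bullet> P2" "0 < X \<bullet> P3"
  shows "X \<in> span_pos P1 P2 P3"
proof -
  define D where "D = P1 \<bullet> (P2 \<times> P3)"
  note cramer = cramer_cross3[of P1 P2 P3 X, folded D_def]
  have "D * (X \<bullet> X) = X \<bullet> (D *\<^sub>R X)" by simp
  also have "\<dots> = (X \<bullet> (P2 \<times> P3)) * (X \<bullet> P1) + (X \<bullet> (P3 \<times> P1)) * (X \<bullet> P2)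
                  + (X \<bullet> (P1 \<times> P2)) * (X \<bullet> P3)"
    unfolding cramer by (simp add: inner_add_right)
  also have "\<dots> > 0" using assms by (simp add: add_pos_pos)
  finally have "D > 0"
    using inner_ge_zero[of X] by (auto simp: zero_less_mult_iff)
  then have "X = (X \<bullet> (P2 \<times> P3) / D) *\<^sub>R P1 + (X \<bullet> (P3 \<times> P1) / D) *\<^sub>R P2
                 + (X \<bullet> (P1 \<times> P2) / D) *\<^sub>R P3"
    using arg_cong[OF cramer, of "scaleR (1 / D)"] by (simp add: scaleR_add_right)
  then show ?thesis
    unfolding span_pos_def using d1 d2 d3 \<open>D > 0\<close> by force
qed

theorem lemma5p8:
  fixes \<epsilon> \<theta>b \<phi>b \<theta> \<phi> :: real and P1 P2 P3 :: "real^3"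
  assumes "\<epsilon> > 0"
    and "norm P1 \<le> 1" "norm P2 \<le> 1" "norm P3 \<le> 1"
    and "eps_spanning \<epsilon> \<theta>b \<phi>b P1 P2 P3"
    and "\<bar>\<theta> - \<theta>b\<bar> \<le> \<epsilon>" "\<bar>\<phi> - \<phi>b\<bar> \<le> \<epsilon>"
    and "inner (Xpt \<theta> \<phi>) P1 > 0" "inner (Xpt \<theta> \<phi>) P2 > 0" "inner (Xpt \<theta> \<phi>) P3 > 0"
  shows "Xpt \<theta> \<phi> \<in> span_pos P1 P2 P3"
proof -
  have near: "norm (Xpt \<theta> \<phi> - Xpt \<theta>b \<phi>b) \<le> 2 * \<epsilon>"
    using norm_Xpt_diff_le[of \<theta> \<phi> \<theta>b \<phi>b] assms(6,7) by linarith
  have "2 * \<epsilon> * 1 < 2 * \<epsilon> * (sqrt 2 + \<epsilon>)"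
    using assms(1)
    by (intro mult_strict_left_mono) (auto intro: add_pos_nonneg less_le_trans[of 1 "sqrt 2"])
  moreover have "2 * \<epsilon> * (sqrt 2 + \<epsilon>) < Xpt \<theta>b \<phi>b \<bullet> (P2 \<times> P3)"
    "2 * \<epsilon> * (sqrt 2 + \<epsilon>) < Xpt \<theta>b \<phi>b \<bullet> (P3 \<times> P1)"
    "2 * \<epsilon> * (sqrt 2 + \<epsilon>) < Xpt \<theta>b \<phi>b \<bullet> (P1 \<times> P2)"
    using assms(5) unfolding eps_spanning_def Let_def inner_rot_Mmat_eq_triple_product by auto
  ultimately show ?thesis
    using triple_product_pos_if_near[OF near] assms(2-4,8-10)
    by (intro mem_span_pos_if_triple_products_pos) (simp_all add: inner_commute)
qed

end
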